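(* Let $X$ be a second countable locally compact Hausdorff space and $T\colon X\to X$ a continuous, locally injective map. Then the saturated critical set $G_\Lambda$ is meagre if and only if the critical point set $C=\{x\in X: T\text{ is not open at }x\}$ is meagre.
   Context: $T$ is open at $x$ if for every neighbourhood $U$ of $x$, $T(x)\in\mathrm{int}(T(U))$. The transfer operator with weight $1$ is $\Lambda(f)(x)=\sum_{y\in T^{-1}(x)}f(y)$ for $f\in C_c(X)$. The critical value set is $C_\Lambda=\{x\in X:\Lambda(f)\text{ is not continuous at }x\text{ for some }f\in C_c(X)\}$, the post-critical set is $P_\Lambda=\bigcup_{n\ge0}T^n(C_\Lambda)$, and the saturated critical set is $G_\Lambda=\bigcup_{k\ge0}T^{-k}(P_\Lambda)$ ($T$ is called sparsely critically saturated when $G_\Lambda$ is meagre). A set is meagre if it is a countable union of sets whose closures have empty interior. *)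

theory Defs
  imports "HOL-Analysis.Analysis"
begin

definition Cc :: "('a::topological_space \<Rightarrow> complex) set" where
  "Cc = {f. continuous_on UNIV f \<and> compact (closure {x. f x \<noteq> 0})}"

definition open_at :: "('a::topological_space \<Rightarrow> 'a) \<Rightarrow> 'a \<Rightarrow> bool" where
  "open_at T x \<longleftrightarrow> (\<forall>U. x \<in> interior U \<longrightarrow> T x \<in> interior (T ` U))"

definition locally_injective :: "('a::topological_space \<Rightarrow> 'a) \<Rightarrow> bool" where
  "locally_injective T \<longleftrightarrow> (\<forall>x. \<exists>U. open U \<and> x \<in> U \<and> inj_on T U)"

text \<open>Transfer operator with weight 1; the sum ranges over the preimages of x
  (terms with f y = 0 omitted, which does not change the value; for f in Cc and
  T locally injective this index set is finite).\<close>
definition transfer_op :: "('a \<Rightarrow> 'a) \<Rightarrow> ('a \<Rightarrow> complex) \<Rightarrow> 'a \<Rightarrow> complex" where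
  "transfer_op T f x = (\<Sum>y | T y = x \<and> f y \<noteq> 0. f y)"

definition critical_value_set :: "('a::topological_space \<Rightarrow> 'a) \<Rightarrow> 'a set" where
  "critical_value_set T = {x. \<exists>f\<in>Cc. \<not> (transfer_op T f \<longlongrightarrow> transfer_op T f x) (at x)}"

definition post_critical_set :: "('a::topological_space \<Rightarrow> 'a) \<Rightarrow> 'a set" where
  "post_critical_set T = (\<Union>n. (T ^^ n) ` critical_value_set T)"

definition saturated_critical_set :: "('a::topological_space \<Rightarrow> 'a) \<Rightarrow> 'a set" where
  "saturated_critical_set T = (\<Union>k. (T ^^ k) -` post_critical_set T)"

definition critical_point_set :: "('a::topological_space \<Rightarrow> 'a) \<Rightarrow> 'a set" where
  "critical_point_set T = {x. \<not> open_at T x}"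

definition nowhere_dense :: "'a::topological_space set \<Rightarrow> bool" where
  "nowhere_dense A \<longleftrightarrow> interior (closure A) = {}"

definition meagre :: "'a::topological_space set \<Rightarrow> bool" where
  "meagre A \<longleftrightarrow> (\<exists>F::nat \<Rightarrow> 'a set. (\<forall>n. nowhere_dense (F n)) \<and> A = (\<Union>n. F n))"

end

theory Submission
  imports Defs
begin

text \<open>Near a point \<open>x\<close> all of whose preimages are points where \<open>T\<close> is open, \<open>\<Lambda> f\<close> is
  a finite sum of \<open>f\<close> composed with continuous local inverses of \<open>T\<close>, hence continuous at \<open>x\<close>;
  conversely a bump function supported on a set where \<open>T\<close> is injective witnesses a critical
  value at the image of every critical point. So \<open>T(C) \<supseteq> C\<^sub>\<Lambda>\<close> and \<open>C \<subseteq> T\<^sup>-\<^sup>1(C\<^sub>\<Lambda>) \<subseteq> G\<^sub>\<Lambda>\<close>.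
  For the converse, meagreness is preserved by images under \<open>T\<close>, since by second countability
  \<open>X\<close> is covered by countably many compact sets on which \<open>T\<close> is an embedding, and by preimages
  under \<open>T\<close>, since by Baire's theorem a meagre \<open>C\<close> has empty interior, so every nonempty open
  set contains a point where \<open>T\<close> is open.\<close>

lemma nowhere_dense_subset: "A \<subseteq> B \<Longrightarrow> nowhere_dense B \<Longrightarrow> nowhere_dense A"
  unfolding nowhere_dense_def by (metis closure_mono interior_mono subset_empty)

lemma nowhere_dense_imp_meagre: "nowhere_dense A \<Longrightarrow> meagre A"
  unfolding meagre_def by (rule exI[of _ "\<lambda>_. A"]) simp

lemma meagre_empty: "meagre {}"
  by (rule nowhere_dense_imp_meagre) (simp add: nowhere_dense_def)

lemma meagre_subset:
  fixes A B :: "'a::topological_space set"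
  assumes "A \<subseteq> B" "meagre B"
  shows "meagre A"
proof -
  obtain F :: "nat \<Rightarrow> 'a set" where F: "\<And>n. nowhere_dense (F n)" "B = (\<Union>n. F n)"
    using assms(2) unfolding meagre_def by blast
  have "nowhere_dense (F n \<inter> A)" for n
    using F(1) nowhere_dense_subset[of "F n \<inter> A" "F n"] by blast
  moreover have "A = (\<Union>n. F n \<inter> A)"
    using assms(1) F(2) by blast
  ultimately show ?thesis
    unfolding meagre_def by (intro exI[of _ "\<lambda>n. F n \<inter> A"]) simp
qed

lemma meagre_countable_UN:
  fixes A :: "'i \<Rightarrow> 'a::topological_space set"
  assumes "countable I" "\<And>i. i \<in> I \<Longrightarrow> meagre (A i)"
  shows "meagre (\<Union>i\<in>I. A i)"
proof (cases "I = {}")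
  case True
  then show ?thesis by (simp add: meagre_empty)
next
  case False
  have "\<forall>i\<in>I. \<exists>F :: nat \<Rightarrow> 'a set. (\<forall>n. nowhere_dense (F n)) \<and> A i = (\<Union>n. F n)"
    using assms(2) unfolding meagre_def by blast
  then obtain F :: "'i \<Rightarrow> nat \<Rightarrow> 'a set"
    where F: "\<forall>i\<in>I. (\<forall>n. nowhere_dense (F i n)) \<and> A i = (\<Union>n. F i n)"
    by (metis bchoice)
  define J where "J = I \<times> (UNIV :: nat set)"
  have "countable J" "J \<noteq> {}"
    using assms(1) False by (auto simp: J_def)
  then have J: "range (from_nat_into J) = J"
    by (simp add: range_from_nat_into)
  define G where "G n = case_prod F (from_nat_into J n)" for n
  have "nowhere_dense (G n)" for n
  proof -
    obtain i m where "from_nat_into J n = (i, m)" "i \<in> I"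
      using from_nat_into[OF \<open>J \<noteq> {}\<close>, of n] by (auto simp: J_def)
    then show ?thesis
      using F by (simp add: G_def)
  qed
  moreover have "(\<Union>i\<in>I. A i) = (\<Union>n. G n)"
  proof -
    have "(\<Union>n. G n) = \<Union>(case_prod F ` range (from_nat_into J))"
      by (simp add: G_def image_image)
    also have "\<dots> = (\<Union>(i, n)\<in>J. F i n)"
      by (simp only: J)
    also have "\<dots> = (\<Union>i\<in>I. A i)"
      using F by (auto simp: J_def)
    finally show ?thesis ..
  qed
  ultimately show ?thesis
    unfolding meagre_def by (intro exI[of _ G]) simp
qed

lemma locally_compact_imp_regular_space:
  assumes "locally_compact_space (euclidean :: 'a::t2_space topology)"
  shows "regular_space (euclidean :: 'a topology)"
proof -
  have "Hausdorff_space (euclidean :: 'a topology)"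
    unfolding Hausdorff_space_def disjnt_def by (simp add: separation_t2)
  then show ?thesis
    using assms locally_compact_Hausdorff_imp_regular_space by blast
qed

lemma meagre_imp_interior_empty:
  fixes A :: "'a::t2_space set"
  assumes lc: "locally_compact_space (euclidean :: 'a topology)" and "meagre A"
  shows "interior A = {}"
proof -
  obtain F :: "nat \<Rightarrow> 'a set" where F: "\<And>n. nowhere_dense (F n)" "A = (\<Union>n. F n)"
    using assms(2) unfolding meagre_def by blast
  have "interior (\<Union>n. closure (F n)) = {}"
    unfolding euclidean_interior_of[symmetric]
  proof (rule Baire_category_alt)
    show "completely_metrizable_space (euclidean :: 'a topology) \<or>
        locally_compact_space (euclidean :: 'a topology) \<and> regular_space (euclidean :: 'a topology)"
      using lc locally_compact_imp_regular_space by blast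
    show "\<And>S. S \<in> range (\<lambda>n. closure (F n)) \<Longrightarrow> closedin euclidean S \<and> euclidean interior_of S = {}"
      using F(1) by (auto simp: nowhere_dense_def simp flip: closed_closedin)
  qed simp
  moreover have "A \<subseteq> (\<Union>n. closure (F n))"
    unfolding F(2) by (intro UN_mono closure_subset) simp
  ultimately show ?thesis
    using interior_mono by blast
qed

lemma locally_compact_compact_neighbourhood:
  fixes x :: "'a::t2_space"
  assumes "locally_compact_space (euclidean :: 'a topology)" "open V" "x \<in> V"
  obtains N K where "open N" "compact K" "x \<in> N" "N \<subseteq> K" "K \<subseteq> V"
proof -
  have "neighbourhood_base_of (\<lambda>C. compactin euclidean C \<and> closedin euclidean C) (euclidean :: 'a topology)"
    using assms(1) locally_compact_imp_regular_space locally_compact_regular_space_neighbourhood_base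
    by blast
  then have "\<exists>N K. open N \<and> (compact K \<and> closed K) \<and> x \<in> N \<and> N \<subseteq> K \<and> K \<subseteq> V"
    unfolding neighbourhood_base_of using assms(2,3) by (simp flip: closed_closedin)
  then show ?thesis
    using that by blast
qed

lemma Cc_bump_function:
  fixes x :: "'a::t2_space"
  assumes lc: "locally_compact_space (euclidean :: 'a topology)" and "open V" "x \<in> V"
  obtains f where "f \<in> Cc" "f x = 1" "{y. f y \<noteq> 0} \<subseteq> V"
proof -
  obtain N K where NK: "open N" "compact K" "x \<in> N" "N \<subseteq> K" "K \<subseteq> V"
    using locally_compact_compact_neighbourhood[OF assms] .
  have "completely_regular_space (euclidean :: 'a topology)"
    using lc locally_compact_imp_regular_space locally_compact_regular_imp_completely_regular_space
    by blast
  moreover have "closedin euclidean (- N)" "x \<in> topspace euclidean - (- N)"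
    using NK by (auto simp flip: closed_closedin)
  ultimately obtain g :: "'a \<Rightarrow> real"
    where g: "continuous_map euclidean (top_of_set {0..1}) g" "g x = 0" "g ` (- N) \<subseteq> {1}"
    using completely_regular_space_def[of "euclidean :: 'a topology"] by blast
  define f where "f y = complex_of_real (1 - g y)" for y
  have "continuous_on UNIV g"
    using g(1) by (metis continuous_map_in_subtopology continuous_map_iff_continuous subtopology_UNIV)
  then have "continuous_on UNIV f"
    unfolding f_def by (intro continuous_intros)
  moreover have support: "{y. f y \<noteq> 0} \<subseteq> N"
    using g(3) by (force simp: f_def)
  then have "closure {y. f y \<noteq> 0} \<subseteq> K"
    using NK(2,4) compact_imp_closed closure_minimal by blast
  then have "K \<inter> closure {y. f y \<noteq> 0} = closure {y. f y \<noteq> 0}"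
    by blast
  then have "compact (closure {y. f y \<noteq> 0})"
    using compact_Int_closed[OF NK(2) closed_closure, of "{y. f y \<noteq> 0}"] by simp
  ultimately have "f \<in> Cc"
    by (simp add: Cc_def)
  moreover have "f x = 1"
    by (simp add: f_def g(2))
  ultimately show ?thesis
    using that support NK(4,5) by blast
qed

lemma locally_injective_countable_compact_cover:
  fixes T :: "'a::{t2_space, second_countable_topology} \<Rightarrow> 'a"
  assumes lc: "locally_compact_space (euclidean :: 'a topology)" and "locally_injective T"
  obtains \<K> where "countable \<K>" "\<Union>\<K> = UNIV"
    "\<And>K. K \<in> \<K> \<Longrightarrow> compact K \<and> (\<exists>U. open U \<and> K \<subseteq> U \<and> inj_on T U)"
proof -
  have "\<forall>x. \<exists>N K. open N \<and> compact K \<and> x \<in> N \<and> N \<subseteq> K \<and> (\<exists>U. open U \<and> K \<subseteq> U \<and> inj_on T U)"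
  proof
    fix x
    obtain U where U: "open U" "x \<in> U" "inj_on T U"
      using assms(2) unfolding locally_injective_def by blast
    obtain N K where "open N" "compact K" "x \<in> N" "N \<subseteq> K" "K \<subseteq> U"
      using locally_compact_compact_neighbourhood[OF lc U(1,2)] .
    then show "\<exists>N K. open N \<and> compact K \<and> x \<in> N \<and> N \<subseteq> K \<and> (\<exists>U. open U \<and> K \<subseteq> U \<and> inj_on T U)"
      using U by blast
  qed
  then obtain N K where NK: "\<And>x. open (N x) \<and> compact (K x) \<and> x \<in> N x \<and> N x \<subseteq> K x \<and>
      (\<exists>U. open U \<and> K x \<subseteq> U \<and> inj_on T U)"
    by metis
  obtain \<N> where \<N>: "\<N> \<subseteq> range N" "countable \<N>" "\<Union>\<N> = \<Union>(range N)"
    using Lindelof[of "range N"] NK by blast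
  obtain D where D: "countable D" "\<N> = N ` D"
    using countable_subset_image[of \<N> N UNIV] \<N> by blast
  have "UNIV = (\<Union>x\<in>D. N x)"
    using \<N>(3) D(2) NK by blast
  also have "\<dots> \<subseteq> (\<Union>x\<in>D. K x)"
    using NK by (intro UN_mono) auto
  finally have "\<Union>(K ` D) = UNIV"
    by blast
  moreover have "\<And>K'. K' \<in> K ` D \<Longrightarrow> compact K' \<and> (\<exists>U. open U \<and> K' \<subseteq> U \<and> inj_on T U)"
    using NK by blast
  ultimately show ?thesis
    using that[of "K ` D"] D(1) by blast
qed

text \<open>Injectivity on the open set \<open>U\<close> forces every interior point of the closed set
  \<open>T ` (K \<inter> closure S)\<close> to come from an interior point of \<open>closure S\<close>.\<close>

lemma nowhere_dense_image_compact:
  fixes T :: "'a::topological_space \<Rightarrow> 'b::t2_space"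
  assumes contT: "continuous_on UNIV T" and "compact K" "open U" "K \<subseteq> U" "inj_on T U"
    and "nowhere_dense S"
  shows "nowhere_dense (T ` (K \<inter> S))"
proof -
  define L where "L = K \<inter> closure S"
  have "compact (T ` L)"
    unfolding L_def using assms(2) contT
    by (intro compact_continuous_image continuous_on_subset[OF contT]) auto
  then have closed: "closed (T ` L)"
    by (rule compact_imp_closed)
  have "interior (T ` L) = {}"
  proof (rule ccontr)
    assume "interior (T ` L) \<noteq> {}"
    then obtain k where k: "k \<in> L" "T k \<in> interior (T ` L)"
      using interior_subset by blast
    define W where "W = U \<inter> T -` interior (T ` L)"
    have "open W"
      unfolding W_def using assms(3) contT
      by (intro open_Int open_vimage) auto
    moreover have "k \<in> W"
      using k assms(4) by (auto simp: W_def L_def)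
    moreover have "W \<subseteq> closure S"
    proof
      fix z assume z: "z \<in> W"
      then obtain l where l: "l \<in> L" "T l = T z"
        using interior_subset by (fastforce simp: W_def)
      then have "l = z"
        using z assms(4,5) by (auto simp: W_def L_def dest: inj_onD)
      then show "z \<in> closure S"
        using l by (simp add: L_def)
    qed
    ultimately have "k \<in> interior (closure S)"
      by (meson interiorI)
    then show False
      using assms(6) by (simp add: nowhere_dense_def)
  qed
  then have "nowhere_dense (T ` L)"
    by (simp add: nowhere_dense_def closure_closed[OF closed])
  then show ?thesis
    by (rule nowhere_dense_subset[rotated]) (auto simp: L_def intro: closure_subset[THEN subsetD])
qed

lemma meagre_image:
  fixes T :: "'a::{t2_space, second_countable_topology} \<Rightarrow> 'a"
  assumes "locally_compact_space (euclidean :: 'a topology)" "continuous_on UNIV T"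
    "locally_injective T" "meagre A"
  shows "meagre (T ` A)"
proof -
  obtain \<K> where \<K>: "countable \<K>" "\<Union>\<K> = UNIV"
    "\<And>K. K \<in> \<K> \<Longrightarrow> compact K \<and> (\<exists>U. open U \<and> K \<subseteq> U \<and> inj_on T U)"
    using locally_injective_countable_compact_cover[OF assms(1,3)] by blast
  obtain F :: "nat \<Rightarrow> 'a set" where F: "\<And>n. nowhere_dense (F n)" "A = (\<Union>n. F n)"
    using assms(4) unfolding meagre_def by blast
  have "T ` A = (\<Union>(K, n)\<in>\<K> \<times> UNIV. T ` (K \<inter> F n))"
    using \<K>(2) F(2) by blast
  also have "meagre \<dots>"
  proof (rule meagre_countable_UN)
    show "countable (\<K> \<times> (UNIV :: nat set))"
      using \<K>(1) by (rule countable_SIGMA) simp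
    fix p assume "p \<in> \<K> \<times> (UNIV :: nat set)"
    then obtain K n where "p = (K, n)" "K \<in> \<K>"
      by blast
    moreover obtain U where "compact K" "open U" "K \<subseteq> U" "inj_on T U"
      using \<K>(3)[OF \<open>K \<in> \<K>\<close>] by blast
    ultimately show "meagre (case p of (K, n) \<Rightarrow> T ` (K \<inter> F n))"
      by (simp add: nowhere_dense_imp_meagre nowhere_dense_image_compact[OF assms(2) _ _ _ _ F(1)])
  qed
  finally show ?thesis .
qed

lemma meagre_image_funpow:
  fixes T :: "'a::{t2_space, second_countable_topology} \<Rightarrow> 'a"
  assumes "locally_compact_space (euclidean :: 'a topology)" "continuous_on UNIV T"
    "locally_injective T" "meagre A"
  shows "meagre ((T ^^ n) ` A)"
proof (induction n)
  case 0
  then show ?case using assms(4) by simp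
next
  case (Suc n)
  have "(T ^^ Suc n) ` A = T ` ((T ^^ n) ` A)"
    by (simp add: image_comp)
  then show ?case
    using meagre_image[OF assms(1-3) Suc.IH] by simp
qed

text \<open>An open subset of \<open>T -` closure S\<close> contains a point where \<open>T\<close> is open, whose image
  is then an interior point of \<open>closure S\<close>.\<close>

lemma nowhere_dense_vimage:
  assumes "continuous_on UNIV T" "interior (critical_point_set T) = {}" "nowhere_dense S"
  shows "nowhere_dense (T -` S)"
proof -
  have "interior (T -` closure S) = {}"
  proof (rule ccontr)
    define U where "U = interior (T -` closure S)"
    assume "U \<noteq> {}"
    then obtain x where x: "x \<in> U" "open_at T x"
      using assms(2) interior_maximal[of U "critical_point_set T"]
      by (auto simp: U_def critical_point_set_def)
    then have "T x \<in> interior (T ` U)"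
      by (simp add: open_at_def U_def)
    moreover have "T ` U \<subseteq> closure S"
      using interior_subset by (fastforce simp: U_def)
    ultimately have "T x \<in> interior (closure S)"
      using interior_mono by blast
    then show False
      using assms(3) by (simp add: nowhere_dense_def)
  qed
  then have "nowhere_dense (T -` closure S)"
    using closed_vimage[OF closed_closure assms(1)] by (simp add: nowhere_dense_def)
  then show ?thesis
    by (rule nowhere_dense_subset[rotated]) (auto intro: closure_subset[THEN subsetD])
qed

lemma meagre_vimage:
  assumes "continuous_on UNIV T" "interior (critical_point_set T) = {}" "meagre M"
  shows "meagre (T -` M)"
proof -
  obtain F :: "nat \<Rightarrow> _" where F: "\<And>n. nowhere_dense (F n)" "M = (\<Union>n. F n)"
    using assms(3) unfolding meagre_def by blast
  have "T -` M = (\<Union>n. T -` F n)"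
    using F(2) by blast
  then show ?thesis
    unfolding meagre_def using nowhere_dense_vimage[OF assms(1,2) F(1)]
    by (intro exI[of _ "\<lambda>n. T -` F n"]) simp
qed

lemma meagre_vimage_funpow:
  assumes "continuous_on UNIV T" "interior (critical_point_set T) = {}" "meagre M"
  shows "meagre ((T ^^ n) -` M)"
proof (induction n)
  case 0
  then show ?case using assms(3) by simp
next
  case (Suc n)
  have "(T ^^ Suc n) -` M = T -` ((T ^^ n) -` M)"
    by (auto simp: funpow_swap1)
  then show ?case
    using meagre_vimage[OF assms(1,2) Suc.IH] by (simp only:)
qed

lemma finite_fibre_Int_compact:
  fixes T :: "'a::t2_space \<Rightarrow> 'a"
  assumes "continuous_on UNIV T" "locally_injective T" "compact K"
  shows "finite (K \<inter> T -` {x})"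
proof -
  define Y where "Y = K \<inter> T -` {x}"
  obtain U where U: "\<And>y. open (U y) \<and> y \<in> U y \<and> inj_on T (U y)"
    using assms(2) unfolding locally_injective_def by metis
  have "compact Y"
    unfolding Y_def using assms(3) closed_vimage[OF closed_singleton assms(1)]
    by (rule compact_Int_closed)
  then obtain Y' where Y': "Y' \<subseteq> Y" "finite Y'" "Y \<subseteq> (\<Union>y\<in>Y'. U y)"
    using compactE_image[of Y Y U] U by blast
  have "Y \<subseteq> Y'"
  proof
    fix z assume "z \<in> Y"
    then obtain y where y: "y \<in> Y'" "z \<in> U y"
      using Y'(3) by blast
    then have "T z = T y"
      using \<open>z \<in> Y\<close> Y'(1) by (auto simp: Y_def)
    then have "z = y"
      using y U[of y] by (auto dest: inj_onD)
    then show "z \<in> Y'"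
      using y(1) by simp
  qed
  then have "finite Y"
    using Y'(2) by (rule finite_subset)
  then show ?thesis
    by (simp add: Y_def)
qed

lemma finite_disjoint_open_neighbourhoods:
  fixes Y :: "'a::t2_space set"
  assumes "finite Y"
  obtains V where "\<And>y. y \<in> Y \<Longrightarrow> open (V y) \<and> y \<in> V y" "disjoint_family_on V Y"
proof -
  have "\<forall>a b :: 'a. \<exists>U W. a \<noteq> b \<longrightarrow> open U \<and> open W \<and> a \<in> U \<and> b \<in> W \<and> U \<inter> W = {}"
    by (metis hausdorff)
  then have "\<exists>A B. \<forall>a b :: 'a. a \<noteq> b \<longrightarrow>
      open (A a b) \<and> open (B a b) \<and> a \<in> A a b \<and> b \<in> B a b \<and> A a b \<inter> B a b = {}"
    by (simp only: choice_iff)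
  then obtain A B where AB: "\<And>a b :: 'a. a \<noteq> b \<Longrightarrow>
      open (A a b) \<and> open (B a b) \<and> a \<in> A a b \<and> b \<in> B a b \<and> A a b \<inter> B a b = {}"
    by blast
  define V where "V y = (\<Inter>b\<in>Y - {y}. A y b \<inter> B b y)" for y
  show ?thesis
  proof
    fix y assume "y \<in> Y"
    have "open (V y)"
      using assms AB by (auto simp: V_def intro!: open_INT)
    moreover have "y \<in> V y"
      unfolding V_def
    proof (intro INT_I IntI)
      fix b assume "b \<in> Y - {y}"
      then show "y \<in> A y b" "y \<in> B b y"
        using AB[of y b] AB[of b y] by auto
    qed
    ultimately show "open (V y) \<and> y \<in> V y" ..
  next
    show "disjoint_family_on V Y"
      unfolding disjoint_family_on_def
    proof (intro ballI impI)
      fix y z assume "y \<in> Y" "z \<in> Y" "y \<noteq> z"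
      then have "V y \<subseteq> A y z" "V z \<subseteq> B y z"
        by (auto simp: V_def)
      then show "V y \<inter> V z = {}"
        using AB[OF \<open>y \<noteq> z\<close>] by blast
    qed
  qed
qed

lemma locally_injective_disjoint_neighbourhoods:
  fixes T :: "'a::t2_space \<Rightarrow> 'a"
  assumes "locally_injective T" "finite Y"
  obtains V where "\<And>y. y \<in> Y \<Longrightarrow> open (V y) \<and> y \<in> V y \<and> inj_on T (V y)"
    "disjoint_family_on V Y"
proof -
  obtain V0 where V0: "\<And>y. y \<in> Y \<Longrightarrow> open (V0 y) \<and> y \<in> V0 y" "disjoint_family_on V0 Y"
    using finite_disjoint_open_neighbourhoods[OF assms(2)] by blast
  obtain U where U: "\<And>y. open (U y) \<and> y \<in> U y \<and> inj_on T (U y)"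
    using assms(1) unfolding locally_injective_def by metis
  show ?thesis
  proof
    show "open (V0 y \<inter> U y) \<and> y \<in> V0 y \<inter> U y \<and> inj_on T (V0 y \<inter> U y)" if "y \<in> Y" for y
      using that V0(1) U[of y] inj_on_subset[of T "U y"] by auto
    show "disjoint_family_on (\<lambda>y. V0 y \<inter> U y) Y"
      using V0(2) by (auto simp: disjoint_family_on_def)
  qed
qed

lemma tendsto_inv_into_open_at:
  assumes "open V" "inj_on T V" "y \<in> V" "open_at T y"
  shows "(inv_into V T \<longlongrightarrow> y) (at (T y))"
proof (rule topological_tendstoI)
  fix S assume "open S" "y \<in> S"
  then have "T y \<in> interior (T ` (S \<inter> V))"
    using assms(1,3,4) by (simp add: open_at_def interior_open open_Int)
  moreover have "inv_into V T z \<in> S" if z: "z \<in> interior (T ` (S \<inter> V))" for z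
  proof -
    obtain w where "w \<in> S \<inter> V" "z = T w"
      using z interior_subset by blast
    then show ?thesis
      using assms(2) by simp
  qed
  ultimately show "eventually (\<lambda>z. inv_into V T z \<in> S) (at (T y))"
    unfolding eventually_at_topological by blast
qed

lemma transfer_op_eq_sum_inv_into:
  assumes "finite Y" "disjoint_family_on V Y" "\<And>y. y \<in> Y \<Longrightarrow> inj_on T (V y)"
    "\<And>y. y \<in> Y \<Longrightarrow> z \<in> T ` V y" "{w. f w \<noteq> 0} \<subseteq> K" "z \<notin> T ` (K - (\<Union>y\<in>Y. V y))"
  shows "transfer_op T f z = (\<Sum>y\<in>Y. f (inv_into (V y) T z))"
proof -
  define h where "h y = inv_into (V y) T z" for y
  have h: "h y \<in> V y" "T (h y) = z" if "y \<in> Y" for y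
    using assms(4)[OF that] by (auto simp: h_def inv_into_into f_inv_into_f)
  have "inj_on h Y"
  proof (rule inj_onI)
    fix y y' assume "y \<in> Y" "y' \<in> Y" "h y = h y'"
    then have "h y \<in> V y \<inter> V y'"
      using h(1)[of y] h(1)[of y'] by simp
    then show "y = y'"
      using assms(2) \<open>y \<in> Y\<close> \<open>y' \<in> Y\<close> by (auto simp: disjoint_family_on_def)
  qed
  moreover have "{w. T w = z \<and> f w \<noteq> 0} \<subseteq> h ` Y"
  proof
    fix w assume w: "w \<in> {w. T w = z \<and> f w \<noteq> 0}"
    then obtain y where y: "y \<in> Y" "w \<in> V y"
      using assms(5,6) by blast
    then have "h y = w"
      using w assms(3) by (auto simp: h_def)
    then show "w \<in> h ` Y"
      using y(1) by blast
  qed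
  ultimately have "transfer_op T f z = sum f (h ` Y)"
    unfolding transfer_op_def using assms(1) h
    by (intro sum.mono_neutral_left) auto
  also have "\<dots> = (\<Sum>y\<in>Y. f (h y))"
    using \<open>inj_on h Y\<close> by (simp add: sum.reindex)
  finally show ?thesis
    by (simp add: h_def)
qed

lemma transfer_op_tendsto:
  fixes T :: "'a::t2_space \<Rightarrow> 'a"
  assumes contT: "continuous_on UNIV T" and li: "locally_injective T" and "f \<in> Cc"
    and open_at: "\<And>y. T y = x \<Longrightarrow> open_at T y"
  shows "(transfer_op T f \<longlongrightarrow> transfer_op T f x) (at x)"
proof -
  define K where "K = closure {y. f y \<noteq> 0}"
  have "compact K" "continuous_on UNIV f" "{y. f y \<noteq> 0} \<subseteq> K"
    using assms(3) closure_subset[of "{y. f y \<noteq> 0}"] by (auto simp: Cc_def K_def)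
  define Y where "Y = K \<inter> T -` {x}"
  have "finite Y"
    unfolding Y_def using finite_fibre_Int_compact[OF contT li \<open>compact K\<close>] .
  obtain V where nbhd: "\<And>y. y \<in> Y \<Longrightarrow> open (V y) \<and> y \<in> V y \<and> inj_on T (V y)"
    and "disjoint_family_on V Y"
    using locally_injective_disjoint_neighbourhoods[OF li \<open>finite Y\<close>] by blast
  have V: "open (V y)" "y \<in> V y" "inj_on T (V y)" "T y = x" if "y \<in> Y" for y
    using that nbhd by (auto simp: Y_def)
  define g where "g z = (\<Sum>y\<in>Y. f (inv_into (V y) T z))" for z
  define W where "W = (\<Inter>y\<in>Y. interior (T ` V y)) - T ` (K - (\<Union>y\<in>Y. V y))"
  have "compact (T ` (K - (\<Union>y\<in>Y. V y)))"
    using \<open>compact K\<close> V(1) continuous_on_subset[OF contT]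
    by (intro compact_continuous_image compact_diff) auto
  then have "open W"
    unfolding W_def using \<open>finite Y\<close> by (intro open_Diff open_INT compact_imp_closed) auto
  moreover have "x \<in> W"
    using V open_at by (auto simp: W_def Y_def open_at_def interior_open)
  moreover have "transfer_op T f z = g z" if "z \<in> W" for z
  proof -
    have "z \<in> T ` V y" if "y \<in> Y" for y
      using \<open>z \<in> W\<close> that interior_subset[of "T ` V y"] by (auto simp: W_def)
    then show ?thesis
      unfolding g_def using \<open>z \<in> W\<close> \<open>{y. f y \<noteq> 0} \<subseteq> K\<close>
      by (intro transfer_op_eq_sum_inv_into[OF \<open>finite Y\<close> \<open>disjoint_family_on V Y\<close> V(3)])
        (auto simp: W_def)
  qed
  moreover have "(g \<longlongrightarrow> (\<Sum>y\<in>Y. f y)) (at x)"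
  proof -
    have "((\<lambda>z. f (inv_into (V y) T z)) \<longlongrightarrow> f y) (at x)" if "y \<in> Y" for y
    proof -
      have "(inv_into (V y) T \<longlongrightarrow> y) (at x)"
        using tendsto_inv_into_open_at[OF V(1,3,2)[OF that] open_at[OF V(4)[OF that]]] V(4)[OF that]
        by simp
      then show ?thesis
        using \<open>continuous_on UNIV f\<close> isCont_tendsto_compose[of y f]
        by (simp add: continuous_on_eq_continuous_at)
    qed
    then show ?thesis
      unfolding g_def by (rule tendsto_sum)
  qed
  moreover have "g x = (\<Sum>y\<in>Y. f y)"
    unfolding g_def using V(2-4) by (intro sum.cong refl) (metis inv_into_f_f)
  ultimately show ?thesis
    by (metis Lim_transform_within_open)
qed

lemma critical_value_set_subset_image:
  fixes T :: "'a::t2_space \<Rightarrow> 'a"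
  assumes "continuous_on UNIV T" "locally_injective T"
  shows "critical_value_set T \<subseteq> T ` critical_point_set T"
  using transfer_op_tendsto[OF assms]
  by (force simp: critical_value_set_def critical_point_set_def)

text \<open>A bump function supported where \<open>T\<close> is injective has \<open>\<Lambda> f (T x) = 1\<close> but vanishes
  outside the image of its support, which is not a neighbourhood of \<open>T x\<close>.\<close>

lemma critical_point_imp_critical_value:
  fixes T :: "'a::t2_space \<Rightarrow> 'a"
  assumes lc: "locally_compact_space (euclidean :: 'a topology)" and "locally_injective T"
    and "\<not> open_at T x"
  shows "T x \<in> critical_value_set T"
proof -
  obtain U where U: "x \<in> interior U" "T x \<notin> interior (T ` U)"
    using assms(3) unfolding open_at_def by blast
  obtain U0 where U0: "open U0" "x \<in> U0" "inj_on T U0"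
    using assms(2) unfolding locally_injective_def by blast
  define V where "V = interior U \<inter> U0"
  have V: "open V" "x \<in> V" "inj_on T V" "V \<subseteq> U"
    using U U0 interior_subset inj_on_subset[OF U0(3)] by (auto simp: V_def)
  obtain f where f: "f \<in> Cc" "f x = 1" "{y. f y \<noteq> 0} \<subseteq> V"
    using Cc_bump_function[OF lc V(1,2)] by blast
  have "{y. T y = T x \<and> f y \<noteq> 0} = {x}"
    using f V(2,3) by (auto dest: inj_onD)
  then have one_at_image: "transfer_op T f (T x) = 1"
    using f(2) by (simp add: transfer_op_def)
  have vanish: "transfer_op T f z = 0" if "z \<notin> T ` V" for z
  proof -
    have "{y. T y = z \<and> f y \<noteq> 0} = {}"
      using that f(3) by blast
    then show ?thesis
      by (simp add: transfer_op_def)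
  qed
  have "\<not> (transfer_op T f \<longlongrightarrow> transfer_op T f (T x)) (at (T x))"
    unfolding one_at_image
  proof
    assume "(transfer_op T f \<longlongrightarrow> 1) (at (T x))"
    then have "eventually (\<lambda>z. transfer_op T f z \<noteq> 0) (at (T x))"
      by (rule tendsto_imp_eventually_ne) simp
    then obtain W where W: "open W" "T x \<in> W" "\<And>z. z \<in> W \<Longrightarrow> z \<noteq> T x \<Longrightarrow> transfer_op T f z \<noteq> 0"
      unfolding eventually_at_topological by blast
    then have "W \<subseteq> T ` U"
      using vanish V(2,4) by blast
    then show False
      using W(1,2) U(2) interiorI by blast
  qed
  then show ?thesis
    unfolding critical_value_set_def using f(1) by blast
qed

theorem corollary4p12:
  fixes T :: "'a::{t2_space, second_countable_topology} \<Rightarrow> 'a"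
  assumes "locally_compact_space (euclidean :: 'a topology)"
    and "continuous_on UNIV T"
    and "locally_injective T"
  shows "meagre (saturated_critical_set T) \<longleftrightarrow> meagre (critical_point_set T)"
proof
  assume "meagre (saturated_critical_set T)"
  moreover have "critical_point_set T \<subseteq> T -` post_critical_set T"
    using critical_point_imp_critical_value[OF assms(1,3)]
    by (force simp: critical_point_set_def post_critical_set_def intro: exI[of _ 0])
  moreover have "T -` post_critical_set T \<subseteq> saturated_critical_set T"
    unfolding saturated_critical_set_def
    using UN_upper[of 1 UNIV "\<lambda>k. (T ^^ k) -` post_critical_set T"] by simp
  ultimately show "meagre (critical_point_set T)"
    by (meson meagre_subset order_trans)
next
  assume "meagre (critical_point_set T)"
  then have "interior (critical_point_set T) = {}"
    by (rule meagre_imp_interior_empty[OF assms(1)])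
  have "meagre (critical_value_set T)"
    using meagre_image[OF assms \<open>meagre (critical_point_set T)\<close>]
      critical_value_set_subset_image[OF assms(2,3)] meagre_subset by blast
  then have "meagre (post_critical_set T)"
    unfolding post_critical_set_def using meagre_image_funpow[OF assms]
    by (intro meagre_countable_UN) auto
  then show "meagre (saturated_critical_set T)"
    unfolding saturated_critical_set_def
    using meagre_vimage_funpow[OF assms(2) \<open>interior (critical_point_set T) = {}\<close>]
    by (intro meagre_countable_UN) auto
qed

end
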